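(* Let $G$ be a connected graph with $\delta(G)=1$ and girth at least $15$. If $G\in\mathcal U$ and $s$ is a single star support vertex of $G$, then $s$ has at most one neighbor that is not a leaf.
   Context: All graphs are finite and simple. A set $P\subseteq V(G)$ is an open packing if no two distinct vertices of $P$ have a common neighbor; it is maximal if maximal under inclusion among open packings. $\rho^o(G)$ is the maximum size of an open packing and $\rho^o_L(G)$ the minimum size of a maximal open packing; $\mathcal U$ is the class of graphs with $\rho^o_L(G)=\rho^o(G)$. A leaf is a vertex of degree $1$; a support vertex is a vertex adjacent to at least one leaf; $S_G$ is the set of support vertices. A single star support vertex is a support vertex that is an isolated vertex of the induced subgraph $G[S_G]$ (i.e., not adjacent to any other support vertex); a double star support vertex is a support vertex adjacent to another support vertex. The girth is the length of a shortest cycle ($\infty$ if acyclic). *)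

theory Defs
  imports Main
begin

definition graph :: "'a set \<Rightarrow> ('a \<Rightarrow> 'a \<Rightarrow> bool) \<Rightarrow> bool" where
  "graph V E \<longleftrightarrow> finite V \<and> (\<forall>u v. E u v \<longrightarrow> u \<in> V \<and> v \<in> V)
     \<and> (\<forall>u v. E u v \<longrightarrow> E v u) \<and> (\<forall>v. \<not> E v v)"

definition nbhd :: "'a set \<Rightarrow> ('a \<Rightarrow> 'a \<Rightarrow> bool) \<Rightarrow> 'a \<Rightarrow> 'a set" where
  "nbhd V E v = {u \<in> V. E v u}"

definition degree :: "'a set \<Rightarrow> ('a \<Rightarrow> 'a \<Rightarrow> bool) \<Rightarrow> 'a \<Rightarrow> nat" where
  "degree V E v = card (nbhd V E v)"

definition min_degree :: "'a set \<Rightarrow> ('a \<Rightarrow> 'a \<Rightarrow> bool) \<Rightarrow> nat" where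
  "min_degree V E = Min (degree V E ` V)"

definition connected :: "'a set \<Rightarrow> ('a \<Rightarrow> 'a \<Rightarrow> bool) \<Rightarrow> bool" where
  "connected V E \<longleftrightarrow> V \<noteq> {} \<and>
     (\<forall>u\<in>V. \<forall>v\<in>V. (\<lambda>x y. x \<in> V \<and> y \<in> V \<and> E x y)\<^sup>*\<^sup>* u v)"

definition leaf :: "'a set \<Rightarrow> ('a \<Rightarrow> 'a \<Rightarrow> bool) \<Rightarrow> 'a \<Rightarrow> bool" where
  "leaf V E v \<longleftrightarrow> v \<in> V \<and> degree V E v = 1"

definition support_vertex :: "'a set \<Rightarrow> ('a \<Rightarrow> 'a \<Rightarrow> bool) \<Rightarrow> 'a \<Rightarrow> bool" where
  "support_vertex V E s \<longleftrightarrow> s \<in> V \<and> (\<exists>l\<in>V. E s l \<and> leaf V E l)"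

definition single_star_support :: "'a set \<Rightarrow> ('a \<Rightarrow> 'a \<Rightarrow> bool) \<Rightarrow> 'a \<Rightarrow> bool" where
  "single_star_support V E s \<longleftrightarrow> support_vertex V E s \<and>
     (\<forall>t\<in>V. E s t \<longrightarrow> \<not> support_vertex V E t)"

definition is_cycle :: "'a set \<Rightarrow> ('a \<Rightarrow> 'a \<Rightarrow> bool) \<Rightarrow> 'a list \<Rightarrow> bool" where
  "is_cycle V E cs \<longleftrightarrow> length cs \<ge> 3 \<and> distinct cs \<and> set cs \<subseteq> V \<and>
     (\<forall>i < length cs - 1. E (cs ! i) (cs ! Suc i)) \<and> E (last cs) (hd cs)"

text \<open>girth at least g (vacuous for acyclic graphs, whose girth is infinite).\<close>
definition girth_at_least :: "'a set \<Rightarrow> ('a \<Rightarrow> 'a \<Rightarrow> bool) \<Rightarrow> nat \<Rightarrow> bool" where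
  "girth_at_least V E g \<longleftrightarrow> (\<forall>cs. is_cycle V E cs \<longrightarrow> length cs \<ge> g)"

definition open_packing :: "'a set \<Rightarrow> ('a \<Rightarrow> 'a \<Rightarrow> bool) \<Rightarrow> 'a set \<Rightarrow> bool" where
  "open_packing V E P \<longleftrightarrow> P \<subseteq> V \<and>
     (\<forall>u\<in>P. \<forall>v\<in>P. u \<noteq> v \<longrightarrow> \<not> (\<exists>w\<in>V. E u w \<and> E v w))"

definition maximal_open_packing :: "'a set \<Rightarrow> ('a \<Rightarrow> 'a \<Rightarrow> bool) \<Rightarrow> 'a set \<Rightarrow> bool" where
  "maximal_open_packing V E P \<longleftrightarrow> open_packing V E P \<and>
     (\<forall>Q. open_packing V E Q \<and> P \<subseteq> Q \<longrightarrow> Q = P)"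

definition open_packing_number :: "'a set \<Rightarrow> ('a \<Rightarrow> 'a \<Rightarrow> bool) \<Rightarrow> nat" where
  "open_packing_number V E = Max (card ` {P. open_packing V E P})"

definition lower_open_packing_number :: "'a set \<Rightarrow> ('a \<Rightarrow> 'a \<Rightarrow> bool) \<Rightarrow> nat" where
  "lower_open_packing_number V E = Min (card ` {P. maximal_open_packing V E P})"

definition class_U :: "'a set \<Rightarrow> ('a \<Rightarrow> 'a \<Rightarrow> bool) \<Rightarrow> bool" where
  "class_U V E \<longleftrightarrow> lower_open_packing_number V E = open_packing_number V E"

end

theory Submission
  imports Defs
begin

text \<open>If the single star support vertex \<open>s\<close> had two non-leaf neighbours \<open>x\<close> and \<open>y\<close>, one finds an
  exchange contradicting \<open>\<rho>\<^sup>o\<^sub>L = \<rho>\<^sup>o\<close>: an open packing \<open>S \<union> B\<close> and a larger set \<open>A\<close> such that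
  \<open>B\<close> can be replaced by \<open>A\<close> in every maximal open packing containing \<open>S \<union> B\<close>.
  Because the girth is at least 15, two non-backtracking walks with the same ends and at most
  16 vertices in total coincide; this keeps the ends of short walks from \<open>s\<close> apart.
  The exchanges are: \<open>{w}\<close> for \<open>{l, u}\<close>, where \<open>l\<close> is a leaf at \<open>s\<close> and \<open>u\<close> a leaf ending a
  walk \<open>s w w' u\<close>; \<open>{x'}\<close> for \<open>{v, s}\<close>, when a walk \<open>s x x' z v\<close> ends in a vertex \<open>v\<close> whose
  neighbours other than \<open>z\<close> are all leaves, with \<open>S\<close> a vertex two steps beyond each walk
  \<open>s w w'\<close>, \<open>w \<noteq> x\<close>; otherwise \<open>{s}\<close> for \<open>{x', y'}\<close>, with \<open>S\<close> a vertex two steps beyond each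
  walk \<open>s b b' z v\<close>, \<open>b \<in> {x, y}\<close>.\<close>

section \<open>Non-backtracking walks\<close>

fun nb_walk :: "'a set \<Rightarrow> ('a \<Rightarrow> 'a \<Rightarrow> bool) \<Rightarrow> 'a list \<Rightarrow> bool" where
  "nb_walk V E [] \<longleftrightarrow> False"
| "nb_walk V E [a] \<longleftrightarrow> a \<in> V"
| "nb_walk V E (a # b # r) \<longleftrightarrow> a \<in> V \<and> E a b \<and> nb_walk V E (b # r) \<and> (r \<noteq> [] \<longrightarrow> a \<noteq> hd r)"

lemma nb_walk_nonempty: "nb_walk V E P \<Longrightarrow> P \<noteq> []"
  by auto

lemma nb_walk_Cons_in_V: "nb_walk V E (a # r) \<Longrightarrow> a \<in> V"
  by (cases r) auto

lemma nb_walk_set: "nb_walk V E P \<Longrightarrow> set P \<subseteq> V"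
  by (induction V E P rule: nb_walk.induct) auto

lemma nb_walk_nth_edge: "nb_walk V E P \<Longrightarrow> Suc i < length P \<Longrightarrow> E (P ! i) (P ! Suc i)"
proof (induction V E P arbitrary: i rule: nb_walk.induct)
  case (3 V E a b r)
  then show ?case by (cases i) auto
qed auto

lemma nb_walk_nth_no_backtrack:
  "nb_walk V E P \<Longrightarrow> Suc (Suc i) < length P \<Longrightarrow> P ! i \<noteq> P ! Suc (Suc i)"
proof (induction V E P arbitrary: i rule: nb_walk.induct)
  case (3 V E a b r)
  then show ?case by (cases i) (auto simp: hd_conv_nth)
qed auto

lemma nb_walk_append:
  "nb_walk V E (xs @ y # ys) \<longleftrightarrow>
     nb_walk V E (xs @ [y]) \<and> nb_walk V E (y # ys) \<and> (xs \<noteq> [] \<longrightarrow> ys \<noteq> [] \<longrightarrow> last xs \<noteq> hd ys)"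
proof (induction xs rule: induct_list012)
  case 1
  then show ?case using nb_walk_Cons_in_V by fastforce
next
  case (2 a)
  show ?case using nb_walk_Cons_in_V[of V E y ys] by (cases ys) simp_all
next
  case (3 a b zs)
  have "hd (zs @ y # ys) = hd (zs @ [y])" by (cases zs) simp_all
  then show ?case using "3.IH"(2) by (simp; blast)
qed

lemma nb_walk_tl: "nb_walk V E (a # r) \<Longrightarrow> r \<noteq> [] \<Longrightarrow> nb_walk V E r"
  by (cases r) auto

lemma nb_walk_appendD1: "nb_walk V E (xs @ ys) \<Longrightarrow> xs \<noteq> [] \<Longrightarrow> nb_walk V E xs"
proof (induction xs rule: induct_list012)
  case (2 a)
  then show ?case using nb_walk_Cons_in_V by fastforce
next
  case (3 a b zs)
  then show ?case by (cases zs) auto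
qed simp

lemma nb_walk_appendD2: "nb_walk V E (xs @ ys) \<Longrightarrow> ys \<noteq> [] \<Longrightarrow> nb_walk V E ys"
  by (induction xs) (auto dest: nb_walk_tl)

lemma nb_walk_last_edge:
  assumes walk: "nb_walk V E P" and "butlast P \<noteq> []"
  shows "E (last (butlast P)) (last P)"
proof -
  obtain B x where B: "butlast P = B @ [x]" using assms(2) by (metis append_butlast_last_id)
  have "B @ [x, last P] = P"
    using nb_walk_nonempty[OF walk] by (metis B append_butlast_last_id append_Cons append_assoc append_Nil)
  then have "nb_walk V E [x, last P]" using nb_walk_appendD2[of V E B "[x, last P]"] walk by simp
  then show ?thesis using B by simp
qed

section \<open>Open packings\<close>

definition conflict :: "'a set \<Rightarrow> ('a \<Rightarrow> 'a \<Rightarrow> bool) \<Rightarrow> 'a \<Rightarrow> 'a \<Rightarrow> bool" where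
  "conflict V E u v \<longleftrightarrow> u \<noteq> v \<and> (\<exists>w\<in>V. E u w \<and> E v w)"

lemma conflict_sym: "conflict V E u v \<longleftrightarrow> conflict V E v u"
  by (auto simp: conflict_def)

lemma open_packing_iff_no_conflict:
  "open_packing V E P \<longleftrightarrow> P \<subseteq> V \<and> (\<forall>u\<in>P. \<forall>v\<in>P. \<not> conflict V E u v)"
  by (auto simp: open_packing_def conflict_def)

lemma open_packing_empty: "open_packing V E {}"
  by (simp add: open_packing_def)

lemma open_packing_insert:
  "open_packing V E (insert v P) \<longleftrightarrow> open_packing V E P \<and> v \<in> V \<and> (\<forall>u\<in>P. \<not> conflict V E v u)"
  unfolding open_packing_def conflict_def by fast

lemma open_packing_subset_V: "open_packing V E P \<Longrightarrow> P \<subseteq> V"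
  by (simp add: open_packing_def)

lemma open_packing_exchange:
  assumes M: "open_packing V E M" and SB: "S \<union> B \<subseteq> M" and A: "open_packing V E A"
    and blocked: "\<And>a. a \<in> A \<Longrightarrow> \<exists>b\<in>B. conflict V E a b"
    and covered: "\<And>a m. a \<in> A \<Longrightarrow> conflict V E a m \<Longrightarrow> m \<in> B \<or> (\<exists>t\<in>S \<union> B. conflict V E m t)"
  shows "open_packing V E ((M - B) \<union> A)" "(M - B) \<inter> A = {}"
proof -
  have M_free: "\<And>u v. u \<in> M \<Longrightarrow> v \<in> M \<Longrightarrow> \<not> conflict V E u v"
    using M by (simp add: open_packing_iff_no_conflict)
  have A_free: "\<And>u v. u \<in> A \<Longrightarrow> v \<in> A \<Longrightarrow> \<not> conflict V E u v"
    using A by (simp add: open_packing_iff_no_conflict)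
  show "(M - B) \<inter> A = {}"
  proof (rule ccontr)
    assume "(M - B) \<inter> A \<noteq> {}"
    then obtain a where "a \<in> M" "a \<in> A" by blast
    with blocked SB M_free show False by blast
  qed
  have cross: "\<not> conflict V E a m" if "a \<in> A" "m \<in> M - B" for a m
    using covered[OF that(1)] that(2) SB M_free by blast
  show "open_packing V E ((M - B) \<union> A)"
    unfolding open_packing_iff_no_conflict
  proof (intro conjI ballI)
    show "(M - B) \<union> A \<subseteq> V" using open_packing_subset_V[OF M] open_packing_subset_V[OF A] by blast
    fix u v assume "u \<in> (M - B) \<union> A" "v \<in> (M - B) \<union> A"
    show "\<not> conflict V E u v"
    proof
      assume uv: "conflict V E u v"
      then have vu: "conflict V E v u" by (simp add: conflict_sym)
      show False using \<open>u \<in> (M - B) \<union> A\<close> \<open>v \<in> (M - B) \<union> A\<close> uv vu M_free A_free cross by blast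
    qed
  qed
qed

locale simple_graph =
  fixes V :: "'a set" and E :: "'a \<Rightarrow> 'a \<Rightarrow> bool"
  assumes graph: "graph V E"
begin

lemma finite_V: "finite V"
  using graph by (simp add: graph_def)

lemma edge_sym: "E u v \<Longrightarrow> E v u"
  using graph by (simp add: graph_def)

lemma edge_in_V1: "E u v \<Longrightarrow> u \<in> V"
  using graph by (simp add: graph_def)

lemma edge_in_V2: "E u v \<Longrightarrow> v \<in> V"
  using graph by (simp add: graph_def)

lemma edge_irrefl: "\<not> E v v"
  using graph by (simp add: graph_def)

lemma leaf_nbr_unique:
  assumes "leaf V E u" "E u a" "E u b"
  shows "a = b"
proof -
  have "card (nbhd V E u) = 1" using assms(1) by (simp add: leaf_def degree_def)
  then obtain c where "nbhd V E u = {c}" by (rule card_1_singletonE)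
  moreover have "a \<in> nbhd V E u" "b \<in> nbhd V E u"
    using assms(2,3) edge_in_V2 by (auto simp: nbhd_def)
  ultimately show ?thesis by simp
qed

lemma nonleaf_other_nbr:
  assumes "u \<in> V" "\<not> leaf V E u" "E u a"
  obtains b where "E u b" "b \<noteq> a"
proof -
  have "a \<in> nbhd V E u" using assms(3) edge_in_V2 by (simp add: nbhd_def)
  moreover have "nbhd V E u \<noteq> {a}" using assms(1,2) by (auto simp: leaf_def degree_def)
  ultimately obtain b where "b \<in> nbhd V E u" "b \<noteq> a" by blast
  then show ?thesis using that unfolding nbhd_def by blast
qed

lemma edge_conflict: "E u w \<Longrightarrow> E v w \<Longrightarrow> u \<noteq> v \<Longrightarrow> conflict V E u v"
  using edge_in_V2 by (auto simp: conflict_def)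

lemma nb_walk_rev: "nb_walk V E (rev P) \<longleftrightarrow> nb_walk V E P"
proof (induction P rule: induct_list012)
  case (3 a b zs)
  have "nb_walk V E (rev (a # b # zs)) \<longleftrightarrow>
      nb_walk V E (rev (b # zs)) \<and> nb_walk V E [b, a] \<and> (zs \<noteq> [] \<longrightarrow> hd zs \<noteq> a)"
    using nb_walk_append[of V E "rev zs" b "[a]"] by (simp add: last_rev)
  also have "\<dots> \<longleftrightarrow> nb_walk V E (a # b # zs)"
    using "3.IH"(2) nb_walk_Cons_in_V[of V E b zs] by (auto simp: edge_sym)
  finally show ?case .
qed simp_all

lemma nb_walk_snoc:
  assumes A: "nb_walk V E A" and edge: "E (last A) w"
    and no_backtrack: "butlast A \<noteq> [] \<Longrightarrow> last (butlast A) \<noteq> w"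
  shows "nb_walk V E (A @ [w])"
proof -
  have A_eq: "A = butlast A @ [last A]" using nb_walk_nonempty[OF A] by simp
  have "nb_walk V E [last A, w]" using edge edge_in_V1 edge_in_V2 by simp
  then have "nb_walk V E (butlast A @ last A # [w])"
    using nb_walk_append[of V E "butlast A" "last A" "[w]"] A A_eq no_backtrack by simp
  then show ?thesis by (metis A_eq append_Cons append_assoc self_append_conv2)
qed

lemma nb_walk_extend_at_nonleaf:
  assumes walk: "nb_walk V E (P @ [u])" and "P \<noteq> []" and nonleaf: "\<not> leaf V E u"
  obtains t where "nb_walk V E (P @ [u, t])"
proof -
  have "E (last P) u" using nb_walk_last_edge[OF walk] \<open>P \<noteq> []\<close> by simp
  then obtain t where "E u t" "t \<noteq> last P"
    using nonleaf_other_nbr[OF edge_in_V2 nonleaf edge_sym] by metis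
  then have "nb_walk V E ((P @ [u]) @ [t])" using nb_walk_snoc[OF walk] \<open>P \<noteq> []\<close> by simp
  then show ?thesis using that by simp
qed

lemma nb_walk_two_apart_conflict:
  assumes "nb_walk V E (P @ [u, t])" "P \<noteq> []"
  shows "conflict V E (last P) t"
proof -
  have "butlast P @ [last P, u, t] = P @ [u, t]"
    using assms(2) by (metis append_butlast_last_id append_Cons append_assoc append_Nil)
  then have "nb_walk V E (butlast P @ [last P, u, t])" using assms(1) by argo
  then have "nb_walk V E [last P, u, t]" using nb_walk_appendD2 by blast
  then show ?thesis using edge_sym by (auto simp: conflict_def dest: edge_in_V2)
qed

lemma finite_open_packing: "open_packing V E P \<Longrightarrow> finite P"
  using finite_V open_packing_subset_V[of V E P] by (rule finite_subset[rotated])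

lemma finite_card_image_open_packings: "finite (card ` {P. open_packing V E P \<and> Q P})"
proof -
  have "{P. open_packing V E P \<and> Q P} \<subseteq> Pow V" by (auto dest: open_packing_subset_V)
  then show ?thesis using finite_V by (meson finite_Pow_iff finite_imageI finite_subset)
qed

lemma card_le_open_packing_number: "open_packing V E P \<Longrightarrow> card P \<le> open_packing_number V E"
  unfolding open_packing_number_def
  using finite_card_image_open_packings[of "\<lambda>_. True"] by (simp add: Max_ge)

lemma lower_open_packing_number_le:
  assumes "maximal_open_packing V E M"
  shows "lower_open_packing_number V E \<le> card M"
proof -
  have eq: "{P. maximal_open_packing V E P} = {P. open_packing V E P \<and> maximal_open_packing V E P}"
    by (auto simp: maximal_open_packing_def)
  have "card M \<in> card ` {P. maximal_open_packing V E P}" using assms by simp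
  then show ?thesis
    unfolding lower_open_packing_number_def
    using finite_card_image_open_packings[of "maximal_open_packing V E"] eq by (simp add: Min_le)
qed

lemma maximal_open_packing_exists:
  assumes "open_packing V E T"
  obtains M where "maximal_open_packing V E M" "T \<subseteq> M"
proof -
  define F where "F = {P. open_packing V E P \<and> T \<subseteq> P}"
  have "finite (card ` F)" unfolding F_def by (rule finite_card_image_open_packings)
  moreover have "card T \<in> card ` F" using assms by (simp add: F_def)
  ultimately obtain M where M: "M \<in> F" "card M = Max (card ` F)"
    by (metis (no_types, lifting) Max_in empty_iff imageE)
  have "maximal_open_packing V E M"
    unfolding maximal_open_packing_def
  proof (intro conjI allI impI)
    show "open_packing V E M" using M by (simp add: F_def)
  next
    fix Q assume Q: "open_packing V E Q \<and> M \<subseteq> Q"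
    then have "card Q \<le> card M"
      using M \<open>finite (card ` F)\<close> by (auto simp: F_def intro: Max_ge)
    then show "Q = M" using Q finite_open_packing card_seteq by blast
  qed
  then show ?thesis using M that by (simp add: F_def)
qed

text \<open>Extending \<open>S \<union> B\<close> to a maximal open packing \<open>M\<close> and replacing \<open>B\<close> by \<open>A\<close> gives an open
  packing larger than \<open>M\<close>.\<close>
lemma class_U_no_exchange:
  assumes U: "class_U V E" and SB: "open_packing V E (S \<union> B)" and A: "open_packing V E A"
    and card_less: "card B < card A"
    and blocked: "\<And>a. a \<in> A \<Longrightarrow> \<exists>b\<in>B. conflict V E a b"
    and covered: "\<And>a m. a \<in> A \<Longrightarrow> conflict V E a m \<Longrightarrow> m \<in> B \<or> (\<exists>t\<in>S \<union> B. conflict V E m t)"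
  shows False
proof -
  obtain M where M: "maximal_open_packing V E M" "S \<union> B \<subseteq> M"
    using maximal_open_packing_exists[OF SB] by blast
  have M_op: "open_packing V E M" using M(1) by (simp add: maximal_open_packing_def)
  have B_M: "B \<subseteq> M" using M(2) by auto
  note exchange = open_packing_exchange[OF M_op M(2) A blocked covered]
  have "card ((M - B) \<union> A) \<le> open_packing_number V E"
    using exchange(1) by (rule card_le_open_packing_number)
  moreover have "card ((M - B) \<union> A) = card M - card B + card A"
    using exchange(2) B_M finite_open_packing[OF M_op] finite_open_packing[OF A]
    by (simp add: card_Un_disjoint card_Diff_subset finite_subset)
  moreover have "card B \<le> card M"
    using B_M finite_open_packing[OF M_op] by (simp add: card_mono)
  moreover have "lower_open_packing_number V E \<le> card M"
    using lower_open_packing_number_le[OF M(1)] .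
  ultimately show False using U card_less by (simp add: class_U_def)
qed

end

section \<open>Walks in graphs of large girth\<close>

context simple_graph
begin

lemma girth_le_closed_nb_walk:
  assumes girth: "girth_at_least V E g"
  shows "nb_walk V E C \<Longrightarrow> 3 \<le> length C \<Longrightarrow> E (last C) (hd C) \<Longrightarrow> g \<le> length C"
proof (induction "length C" arbitrary: C rule: less_induct)
  case less
  show ?case
  proof (cases "distinct C")
    case True
    have "is_cycle V E C"
      unfolding is_cycle_def
      using True less.prems nb_walk_set[of V E C] nb_walk_nth_edge[of V E C] by auto
    then show ?thesis using girth unfolding girth_at_least_def by blast
  next
    case False
    then obtain i j where ij: "i < j" "j < length C" "C ! i = C ! j"
      by (metis distinct_conv_nth linorder_neqE_nat)
    define D where "D = take (j - i) (drop i C)"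
    have len: "length D = j - i" using ij by (simp add: D_def)
    have "nb_walk V E (drop i C)"
      using nb_walk_appendD2[of V E "take i C" "drop i C"] less.prems(1) ij by simp
    moreover have "drop i C = D @ drop (j - i) (drop i C)"
      by (simp only: D_def append_take_drop_id)
    ultimately have walk: "nb_walk V E D"
      using nb_walk_appendD1[of V E D "drop (j - i) (drop i C)"] ij len by force
    have edge: "E (C ! (j - 1)) (C ! j)"
      using nb_walk_nth_edge[OF less.prems(1), of "j - 1"] ij by simp
    have "hd D = C ! i" "last D = C ! (j - 1)"
      using ij by (simp_all add: D_def hd_drop_conv_nth last_conv_nth)
    then have closed: "E (last D) (hd D)" using edge ij by simp
    have "j \<noteq> Suc i" using edge ij edge_irrefl by auto
    moreover have "j \<noteq> Suc (Suc i)"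
      using nb_walk_nth_no_backtrack[OF less.prems(1), of i] ij by auto
    ultimately have "3 \<le> length D" using ij len by linarith
    then have "g \<le> length D" using less.hyps[OF _ walk _ closed] len ij by simp
    then show ?thesis using len ij by simp
  qed
qed

lemma closed_nb_walk_trivial:
  assumes girth: "girth_at_least V E g" and walk: "nb_walk V E P"
    and closed: "hd P = last P" and short: "length P \<le> g"
  shows "length P = 1"
proof -
  have "P \<noteq> []" using walk by auto
  have hd: "hd P = P ! 0" and last: "last P = P ! (length P - 1)"
    using \<open>P \<noteq> []\<close> by (simp_all add: hd_conv_nth last_conv_nth)
  have "length P \<noteq> 0" using \<open>P \<noteq> []\<close> by simp
  then consider "length P = 1" | "length P = 2" | "length P = 3" | "4 \<le> length P"
    by linarith
  then show ?thesis
  proof cases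
    case 2
    then show ?thesis
      using nb_walk_nth_edge[OF walk, of 0] closed hd last edge_irrefl by simp
  next
    case 3
    then show ?thesis
      using nb_walk_nth_no_backtrack[OF walk, of 0] closed hd last by (simp add: numeral_eq_Suc)
  next
    case 4
    define C where "C = butlast P"
    have len: "length C = length P - 1" by (simp add: C_def)
    then have "C \<noteq> []" using 4 by auto
    then have "nb_walk V E C"
      using nb_walk_appendD1[of V E C "[last P]"] walk \<open>P \<noteq> []\<close> by (simp add: C_def)
    moreover have "3 \<le> length C" using 4 len by simp
    moreover have "E (last C) (hd C)"
    proof -
      have "hd C = hd P"
        using \<open>C \<noteq> []\<close> \<open>P \<noteq> []\<close> by (metis C_def append_butlast_last_id hd_append2)
      then show ?thesis using nb_walk_last_edge[OF walk] \<open>C \<noteq> []\<close> closed by (simp add: C_def)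
    qed
    ultimately have "g \<le> length C" by (rule girth_le_closed_nb_walk[OF girth])
    then show ?thesis using short 4 len by simp
  qed simp
qed

lemma girth_le_diverging_nb_walks:
  assumes girth: "girth_at_least V E g"
    and P: "nb_walk V E (P @ [a])" and Q: "nb_walk V E (Q @ [a])"
    and "P \<noteq> []" "Q \<noteq> []" and hd: "hd P = hd Q" and diverge: "last P \<noteq> last Q"
  shows "g \<le> length P + length Q"
proof -
  obtain q R where Q_eq: "Q = q # R" using \<open>Q \<noteq> []\<close> by (meson neq_Nil_conv)
  define C where "C = P @ a # rev R"
  have "nb_walk V E (R @ [a])" using nb_walk_tl[of V E q "R @ [a]"] Q Q_eq by simp
  then have "nb_walk V E (a # rev R)" using nb_walk_rev[of "R @ [a]"] by simp
  then have "nb_walk V E C"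
    using P diverge Q_eq
    by (simp add: C_def nb_walk_append[of V E P a "rev R"] hd_rev split: if_splits)
  moreover have "3 \<le> length C"
  proof (rule ccontr)
    assume "\<not> 3 \<le> length C"
    then have "length P + length R < 2" by (simp add: C_def)
    moreover have "length P \<noteq> 0" using \<open>P \<noteq> []\<close> by simp
    ultimately have "length P = 1" "length R = 0" by linarith+
    then have "P = [q]" "R = []" using hd Q_eq by (auto simp: length_Suc_conv)
    then show False using diverge Q_eq by simp
  qed
  moreover have "E (last C) (hd C)"
  proof (cases R)
    case Nil
    then show ?thesis using Q Q_eq hd \<open>P \<noteq> []\<close> by (simp add: C_def edge_sym)
  next
    case (Cons r R')
    then show ?thesis using Q Q_eq hd \<open>P \<noteq> []\<close> by (auto simp: C_def last_rev edge_sym)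
  qed
  ultimately have "g \<le> length C" by (rule girth_le_closed_nb_walk[OF girth])
  then show ?thesis using Q_eq by (simp add: C_def)
qed

lemma nb_walk_unique:
  assumes girth: "girth_at_least V E g"
  shows "nb_walk V E P \<Longrightarrow> nb_walk V E Q \<Longrightarrow> hd P = hd Q \<Longrightarrow> last P = last Q \<Longrightarrow>
    length P + length Q \<le> g + 1 \<Longrightarrow> P = Q"
proof (induction P arbitrary: Q rule: rev_induct)
  case (snoc a P')
  have "Q \<noteq> []" using snoc.prems(2) by auto
  then obtain Q' where Q: "Q = Q' @ [a]"
    using snoc.prems(4) by (metis append_butlast_last_id last_snoc)
  show ?case
  proof (cases "P' = [] \<or> Q' = []")
    case True
    then have "length (P' @ [a]) = 1 \<and> length Q = 1"
      using closed_nb_walk_trivial[OF girth snoc.prems(2)] closed_nb_walk_trivial[OF girth snoc.prems(1)]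
        snoc.prems(3,5) Q by auto
    then show ?thesis using snoc.prems(3) Q by (simp add: length_Suc_conv)
  next
    case False
    have hd: "hd P' = hd Q'" using snoc.prems(3) False Q by simp
    have "last P' = last Q'"
    proof (rule ccontr)
      assume "last P' \<noteq> last Q'"
      then have "g \<le> length P' + length Q'"
        using girth_le_diverging_nb_walks[OF girth snoc.prems(1)] snoc.prems(2) Q False hd by auto
      then show False using snoc.prems(5) Q by simp
    qed
    have "P' = Q'"
    proof (rule snoc.IH)
      show "nb_walk V E P'" using nb_walk_appendD1[of V E P' "[a]"] snoc.prems(1) False by simp
      show "nb_walk V E Q'" using nb_walk_appendD1[of V E Q' "[a]"] snoc.prems(2) Q False by simp
      show "length P' + length Q' \<le> g + 1" using snoc.prems(5) Q by simp
    qed fact+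
    then show ?thesis using Q by simp
  qed
qed simp

lemma nb_walk_reaching_nbr:
  assumes A: "nb_walk V E A" and edge: "E (last A) w"
  obtains A' where "nb_walk V E A'" "hd A' = hd A" "last A' = w" "A' @ [last A] = A \<or> A' = A @ [w]"
proof (cases "butlast A \<noteq> [] \<and> last (butlast A) = w")
  case True
  have eq: "butlast A @ [last A] = A" using nb_walk_nonempty[OF A] by simp
  have "nb_walk V E (butlast A)"
    using nb_walk_appendD1[of V E "butlast A" "[last A]"] A eq True by simp
  moreover have "hd (butlast A) = hd A" using eq True by (metis hd_append2)
  ultimately show ?thesis using that True eq by blast
next
  case False
  then have "nb_walk V E (A @ [w])" using nb_walk_snoc[OF A edge] by auto
  then show ?thesis using that nb_walk_nonempty[OF A] by simp
qed

text \<open>Stepping on to \<open>w\<close>, or back when the walk already came from \<open>w\<close>, turns both walks into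
  walks ending at \<open>w\<close>, which then coincide.\<close>
lemma nb_walks_meet:
  assumes girth: "girth_at_least V E g"
    and P: "nb_walk V E P" and Q: "nb_walk V E Q" and hd: "hd P = hd Q"
    and "E (last P) w" "E (last Q) w" and short: "length P + length Q + 1 \<le> g"
  shows "butlast P = butlast Q \<or> Q = P @ [w, last Q] \<or> P = Q @ [w, last P]"
proof -
  obtain P' where P': "nb_walk V E P'" "hd P' = hd P" "last P' = w" "P' @ [last P] = P \<or> P' = P @ [w]"
    using nb_walk_reaching_nbr[OF P assms(5)] by blast
  obtain Q' where Q': "nb_walk V E Q'" "hd Q' = hd Q" "last Q' = w" "Q' @ [last Q] = Q \<or> Q' = Q @ [w]"
    using nb_walk_reaching_nbr[OF Q assms(6)] by blast
  have "length P' \<le> length P + 1" "length Q' \<le> length Q + 1"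
    using P'(4) Q'(4) by (auto dest!: arg_cong[of _ _ length])
  then have "P' = Q'" using nb_walk_unique[OF girth P'(1) Q'(1)] P' Q' hd short by simp
  show ?thesis
  proof (cases "P' @ [last P] = P")
    case True
    then show ?thesis using Q'(4) \<open>P' = Q'\<close> by (metis butlast_snoc append_assoc append_Cons append_Nil)
  next
    case False
    then have "P' = P @ [w]" using P'(4) by blast
    then show ?thesis using Q'(4) \<open>P' = Q'\<close> by (metis append1_eq_conv append_assoc append_Cons append_Nil)
  qed
qed

lemma nb_walk_ends_no_conflict:
  assumes girth: "girth_at_least V E g" and P: "nb_walk V E P" and Q: "nb_walk V E Q"
    and hd: "hd P = hd Q" and longer: "length Q + 2 < length P"
    and short: "length P + length Q + 1 \<le> g"
  shows "last P \<noteq> last Q" "\<not> conflict V E (last P) (last Q)"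
proof -
  show "last P \<noteq> last Q" using nb_walk_unique[OF girth P Q hd] longer short by auto
  show "\<not> conflict V E (last P) (last Q)"
  proof
    assume "conflict V E (last P) (last Q)"
    then obtain c where "E (last P) c" "E (last Q) c" by (auto simp: conflict_def)
    then have "butlast P = butlast Q \<or> Q = P @ [c, last Q] \<or> P = Q @ [c, last P]"
      using nb_walks_meet[OF girth P Q hd] short by blast
    then show False using longer by (auto dest: arg_cong[of _ _ length])
  qed
qed

lemma walk_extension_ends_open_packing:
  assumes girth: "girth_at_least V E g"
    and walks: "\<And>P. P \<in> Pre \<Longrightarrow> nb_walk V E (P @ [u P, t P]) \<and> hd P = s \<and> length P = k"
    and short: "2 * k + 5 \<le> g"
  shows "open_packing V E (t ` Pre)"
  unfolding open_packing_iff_no_conflict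
proof (intro conjI ballI)
  show "t ` Pre \<subseteq> V" using walks nb_walk_set by fastforce
next
  fix t1 t2 assume "t1 \<in> t ` Pre" "t2 \<in> t ` Pre"
  then obtain P1 P2 where P: "P1 \<in> Pre" "P2 \<in> Pre" "t1 = t P1" "t2 = t P2" by blast
  show "\<not> conflict V E t1 t2"
  proof
    assume "conflict V E t1 t2"
    then obtain c where c: "E t1 c" "E t2 c" "t1 \<noteq> t2" by (auto simp: conflict_def)
    then have "P1 \<noteq> P2" using P by blast
    then have "P1 \<noteq> []" "P2 \<noteq> []" using walks[OF P(1)] walks[OF P(2)] by (metis length_0_conv)+
    have "butlast (P1 @ [u P1, t P1]) = butlast (P2 @ [u P2, t P2])"
      using nb_walks_meet[OF girth, of "P1 @ [u P1, t P1]" "P2 @ [u P2, t P2]" c] walks[OF P(1)] walks[OF P(2)]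
        short c P \<open>P1 \<noteq> []\<close> \<open>P2 \<noteq> []\<close> by auto
    then show False using \<open>P1 \<noteq> P2\<close> by (simp add: butlast_append)
  qed
qed

end

section \<open>Single star support vertices\<close>

context simple_graph
begin

lemma class_U_no_leaf_to_leaf_walk:
  assumes U: "class_U V E" and l: "leaf V E l" "E l s"
    and walk: "E s w" "E w w'" "w' \<noteq> s" "E w' u"
  shows "\<not> leaf V E u"
proof
  assume u: "leaf V E u"
  have l_nbr: "c = s" if "E l c" for c using leaf_nbr_unique[OF l(1) that l(2)] .
  have u_nbr: "c = w'" if "E u c" for c using leaf_nbr_unique[OF u that edge_sym[OF walk(4)]] .
  have "l \<noteq> w" using l_nbr walk(2,3) by blast
  have "u \<noteq> w" using u_nbr edge_sym[OF walk(1)] walk(3) by blast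
  have "l \<noteq> u" using l_nbr edge_sym[OF walk(4)] walk(3) by blast
  show False
  proof (rule class_U_no_exchange[OF U, of "{}" "{w}" "{l, u}"])
    show "open_packing V E ({} \<union> {w})"
      using edge_in_V2[OF walk(1)] by (simp add: open_packing_insert open_packing_empty)
    have "\<not> conflict V E l u" using l_nbr u_nbr walk(3) by (auto simp: conflict_def)
    then show "open_packing V E {l, u}"
      using edge_in_V1[OF l(2)] edge_in_V2[OF walk(4)] by (simp add: open_packing_insert open_packing_empty)
    show "card {w} < card {l, u}" using \<open>l \<noteq> u\<close> by simp
    show "\<exists>b\<in>{w}. conflict V E a b" if "a \<in> {l, u}" for a
      using that \<open>l \<noteq> w\<close> \<open>u \<noteq> w\<close> l(2) edge_sym[OF walk(1)] edge_sym[OF walk(4)] walk(2)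
      by (auto intro: edge_conflict)
    show "m \<in> {w} \<or> (\<exists>t\<in>{} \<union> {w}. conflict V E m t)"
      if a: "a \<in> {l, u}" and am: "conflict V E a m" for a m
    proof -
      obtain c where c: "E a c" "E m c" using am by (auto simp: conflict_def)
      then have "E m s \<and> E w s \<or> E m w' \<and> E w w'"
        using a l_nbr u_nbr walk edge_sym by blast
      then show ?thesis by (metis edge_conflict insertI1 sup_bot.left_neutral)
    qed
  qed
qed

lemma single_star_nb_walk_extends:
  assumes U: "class_U V E" and s: "single_star_support V E s" and walk: "nb_walk V E [s, w, w']"
  obtains c t where "nb_walk V E [s, w, w', c, t]"
proof -
  have sw: "E s w" and ww': "E w w'" and w's: "w' \<noteq> s" using walk by auto
  obtain l where l: "leaf V E l" "E l s"
    using s edge_sym by (auto simp: single_star_support_def support_vertex_def)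
  have "\<not> leaf V E w'"
  proof
    assume "leaf V E w'"
    then have "support_vertex V E w" using ww' edge_in_V1 edge_in_V2 by (auto simp: support_vertex_def)
    then show False using s sw edge_in_V2 by (auto simp: single_star_support_def)
  qed
  then obtain c where c: "nb_walk V E ([s, w] @ [w', c])"
    using nb_walk_extend_at_nonleaf[of "[s, w]" w'] walk by auto
  have "\<not> leaf V E c" using class_U_no_leaf_to_leaf_walk[OF U l sw ww' w's] c by simp
  then obtain t where "nb_walk V E ([s, w, w'] @ [c, t])"
    using nb_walk_extend_at_nonleaf[of "[s, w, w']" c] c by auto
  then show ?thesis using that by (simp only: append.simps)
qed

lemma single_star_walk_end_nonleaf_nbr:
  assumes girth: "girth_at_least V E 15" and U: "class_U V E"
    and s: "single_star_support V E s" and walk: "nb_walk V E [s, x, x', z, v]"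
  shows "\<exists>u. nb_walk V E [s, x, x', z, v, u] \<and> \<not> leaf V E u"
proof (rule ccontr)
  assume no_nonleaf: "\<not> ?thesis"
  have sV: "s \<in> V" and sx: "E s x" and xx': "E x x'" and x'z: "E x' z" and zv: "E z v"
    and x's: "x' \<noteq> s" and vx': "v \<noteq> x'"
    using walk by auto
  have v_leaves: "leaf V E c" if vc: "E v c" "c \<noteq> z" for c
  proof (rule ccontr)
    assume "\<not> leaf V E c"
    moreover have "nb_walk V E [s, x, x', z, v, c]" using walk vc edge_in_V2[OF vc(1)] by auto
    ultimately show False using no_nonleaf by blast
  qed
  define Pre where "Pre = {[s, w, w'] | w w'. nb_walk V E [s, w, w'] \<and> w \<noteq> x}"
  have "\<exists>u t. nb_walk V E (P @ [u, t])" if P_in: "P \<in> Pre" for P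
  proof -
    obtain w w' where P: "P = [s, w, w']" "nb_walk V E [s, w, w']" using P_in by (auto simp: Pre_def)
    then obtain c t where "nb_walk V E [s, w, w', c, t]" using single_star_nb_walk_extends[OF U s] by blast
    then show ?thesis using P(1) by auto
  qed
  then obtain u t where ext: "\<And>P. P \<in> Pre \<Longrightarrow> nb_walk V E (P @ [u P, t P])" by metis
  have "open_packing V E (t ` Pre)"
    by (rule walk_extension_ends_open_packing[OF girth, of Pre u t s 3]) (auto simp: Pre_def ext)
  moreover have "\<not> conflict V E x' (t P)" if "P \<in> Pre" for P
  proof
    assume "conflict V E x' (t P)"
    then obtain c where "E x' c" "E (t P) c" by (auto simp: conflict_def)
    moreover obtain w w' where "P = [s, w, w']" "w \<noteq> x" using \<open>P \<in> Pre\<close> by (auto simp: Pre_def)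
    moreover have "nb_walk V E [s, x, x']" using walk by simp
    ultimately show False
      using nb_walks_meet[OF girth ext[OF \<open>P \<in> Pre\<close>], of "[s, x, x']" c] by auto
  qed
  ultimately have packing_SB: "open_packing V E (t ` Pre \<union> {x'})"
    using edge_in_V2[OF xx'] by (simp add: open_packing_insert)
  have "v \<noteq> s" "\<not> conflict V E v s"
    using nb_walk_ends_no_conflict[OF girth walk, of "[s]"] sV by simp_all
  then have packing_A: "open_packing V E {v, s}"
    using sV edge_in_V2[OF zv] by (simp add: open_packing_insert open_packing_empty)
  have covered: "m \<in> {x'} \<or> (\<exists>t'\<in>t ` Pre \<union> {x'}. conflict V E m t')"
    if a: "a \<in> {v, s}" and am: "conflict V E a m" for a m
  proof -
    obtain c where c: "E a c" "E m c" "m \<noteq> a" using am by (auto simp: conflict_def)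
    consider "c = z \<or> c = x" "E x' c" | "a = v" "c \<noteq> z" | "a = s" "c \<noteq> x"
      using a x'z edge_sym[OF xx'] by auto
    then show ?thesis
    proof cases
      case 1
      then show ?thesis using c edge_conflict[of m c x'] by auto
    next
      case 2
      then show ?thesis using c leaf_nbr_unique v_leaves edge_sym by metis
    next
      case 3
      then have "[s, c, m] \<in> Pre" using c sV edge_sym edge_in_V1 by (auto simp: Pre_def)
      then show ?thesis using nb_walk_two_apart_conflict[OF ext] by fastforce
    qed
  qed
  show False
  proof (rule class_U_no_exchange[OF U packing_SB packing_A _ _ covered])
    show "card {x'} < card {v, s}" using \<open>v \<noteq> s\<close> by simp
    show "\<exists>b\<in>{x'}. conflict V E a b" if "a \<in> {v, s}" for a
      using that vx' x's edge_conflict[OF edge_sym[OF zv] x'z] edge_conflict[OF sx edge_sym[OF xx']]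
      by auto
  qed
qed

lemma two_branches_not_class_U:
  assumes girth: "girth_at_least V E 15" and U: "class_U V E"
    and x: "nb_walk V E [s, x, x']" and y: "nb_walk V E [s, y, y']" and "x \<noteq> y"
    and far_x: "\<And>z v. nb_walk V E [s, x, x', z, v] \<Longrightarrow> \<exists>u. nb_walk V E [s, x, x', z, v, u] \<and> \<not> leaf V E u"
    and far_y: "\<And>z v. nb_walk V E [s, y, y', z, v] \<Longrightarrow> \<exists>u. nb_walk V E [s, y, y', z, v, u] \<and> \<not> leaf V E u"
  shows False
proof -
  define Br where "Br = {(x, x'), (y, y')}"
  have branch: "nb_walk V E [s, b, b']" if "(b, b') \<in> Br" for b b'
    using that x y by (auto simp: Br_def)
  define Pre where "Pre = {[s, b, b', z, v] | b b' z v. (b, b') \<in> Br \<and> nb_walk V E [s, b, b', z, v]}"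
  have "\<exists>u t. nb_walk V E (P @ [u, t])" if P_in: "P \<in> Pre" for P
  proof -
    obtain b b' z v where P: "P = [s, b, b', z, v]" "(b, b') \<in> Br" "nb_walk V E [s, b, b', z, v]"
      using P_in by (auto simp: Pre_def)
    have "\<exists>u. nb_walk V E [s, b, b', z, v, u] \<and> \<not> leaf V E u"
    proof (cases "(b, b') = (x, x')")
      case True
      then show ?thesis using far_x P(3) by blast
    next
      case False
      then have "(b, b') = (y, y')" using P(2) unfolding Br_def by blast
      then show ?thesis using far_y P(3) by blast
    qed
    then obtain u where u: "nb_walk V E (P @ [u])" "\<not> leaf V E u" using P(1) by auto
    then show ?thesis using nb_walk_extend_at_nonleaf[OF u(1) _ u(2)] P(1) by blast
  qed
  then obtain u t where ext: "\<And>P. P \<in> Pre \<Longrightarrow> nb_walk V E (P @ [u P, t P])" by metis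
  have sV: "s \<in> V" using x by simp
  have "open_packing V E (t ` Pre)"
    by (rule walk_extension_ends_open_packing[OF girth, of Pre u t s 5]) (auto simp: Pre_def ext)
  moreover have "\<not> conflict V E s (t P)" if "P \<in> Pre" for P
  proof -
    obtain b b' z v where "P = [s, b, b', z, v]" using \<open>P \<in> Pre\<close> by (auto simp: Pre_def)
    then show ?thesis
      using nb_walk_ends_no_conflict(2)[OF girth ext[OF \<open>P \<in> Pre\<close>], of "[s]"] sV
      by (simp add: conflict_sym[of V E s])
  qed
  ultimately have packing_SB: "open_packing V E (t ` Pre \<union> {s})"
    using sV by (simp add: open_packing_insert)
  have "x' \<noteq> y'" using nb_walk_unique[OF girth x y] \<open>x \<noteq> y\<close> by auto
  moreover have "\<not> conflict V E x' y'"
  proof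
    assume "conflict V E x' y'"
    then obtain c where "E x' c" "E y' c" by (auto simp: conflict_def)
    then show False using nb_walks_meet[OF girth x y, of c] \<open>x \<noteq> y\<close> by auto
  qed
  ultimately have packing_A: "open_packing V E {x', y'}"
    using x y by (simp add: open_packing_insert open_packing_empty)
  have covered: "m \<in> {s} \<or> (\<exists>t'\<in>t ` Pre \<union> {s}. conflict V E m t')"
    if a: "a \<in> {x', y'}" and am: "conflict V E a m" for a m
  proof -
    obtain b where b: "(b, a) \<in> Br" using a by (auto simp: Br_def)
    obtain c where c: "E a c" "E m c" "m \<noteq> a" using am by (auto simp: conflict_def)
    show ?thesis
    proof (cases "c = b")
      case True
      then show ?thesis using c branch[OF b] edge_conflict[of m b s] by auto
    next
      case False
      then have "[s, b, a, c, m] \<in> Pre"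
        using b branch[OF b] c edge_sym edge_in_V1 by (auto simp: Pre_def)
      then show ?thesis using nb_walk_two_apart_conflict[OF ext] by fastforce
    qed
  qed
  show False
  proof (rule class_U_no_exchange[OF U packing_SB packing_A _ _ covered])
    show "card {s} < card {x', y'}" using \<open>x' \<noteq> y'\<close> by simp
    have "E s x" "E x x'" "x' \<noteq> s" "E s y" "E y y'" "y' \<noteq> s" using x y by auto
    then show "\<exists>b\<in>{s}. conflict V E a b" if "a \<in> {x', y'}" for a
      using that edge_conflict[OF edge_sym] by blast
  qed
qed

end

theorem lemma5:
  fixes V :: "'a set" and E :: "'a \<Rightarrow> 'a \<Rightarrow> bool" and s :: 'a
  assumes "graph V E"
    and "connected V E"
    and "min_degree V E = 1"
    and "girth_at_least V E 15"
    and "class_U V E"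
    and "single_star_support V E s"
  shows "card {u \<in> nbhd V E s. \<not> leaf V E u} \<le> 1"
proof (rule ccontr)
  interpret simple_graph V E using assms(1) by (rule simple_graph.intro)
  assume "\<not> ?thesis"
  moreover have "finite {u \<in> nbhd V E s. \<not> leaf V E u}"
    using finite_V by (simp add: nbhd_def)
  ultimately obtain x y where "x \<noteq> y" and xy: "x \<in> nbhd V E s" "y \<in> nbhd V E s"
    and nonleaf: "\<not> leaf V E x" "\<not> leaf V E y"
    by (auto simp: card_le_Suc0_iff_eq)
  have sV: "s \<in> V" using assms(6) by (simp add: single_star_support_def support_vertex_def)
  have sx: "E s x" and sy: "E s y" using xy by (simp_all add: nbhd_def)
  obtain x' where x': "E x x'" "x' \<noteq> s"
    using nonleaf_other_nbr[OF edge_in_V2[OF sx] nonleaf(1) edge_sym[OF sx]] .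
  obtain y' where y': "E y y'" "y' \<noteq> s"
    using nonleaf_other_nbr[OF edge_in_V2[OF sy] nonleaf(2) edge_sym[OF sy]] .
  have "nb_walk V E [s, x, x']" "nb_walk V E [s, y, y']"
    using sV sx sy x' y' edge_in_V2 by auto
  then show False
    using two_branches_not_class_U[OF assms(4,5) _ _ \<open>x \<noteq> y\<close>]
      single_star_walk_end_nonleaf_nbr[OF assms(4,5,6)] by blast
qed

end
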